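(* In the production planning setting described in the context, fix $\pmb{x}\in\mathbb{X}$, assume $\Gamma^c\in\mathbb{Z}_+$ and $\Delta_t\in\mathbb{Z}_+$ for all $t\in[T]$, and let $G$ with arc costs be as defined in the context. Then for every real $C^*$: a solution with cost $C^*$ is optimal for the problem $$\max\ \sum_{t\in[T]}\max\{f_I(X_t,\widehat{D}_t-\delta_t),f_B(X_t,\widehat{D}_t+\delta_t)\}\ \text{ s.t. }\ \sum_{t\in[T]}\delta_t\le\Gamma^c,\ 0\le\delta_t\le\Delta_t\ (t\in[T])$$ if and only if there is a longest $\mathfrak{s}$-$\mathfrak{t}$ path in $G$ with length $C^*$.
   Context: There are $T\ge 1$ periods, $[T]=\{1,\dots,T\}$. Given are costs $c^P,c^I,c^B$, a selling price $b^P$, and a set $\mathbb{X}\subseteq\mathbb{R}^T_+$ of feasible production plans described by finitely many linear constraints; for a plan $X_t=\sum_{i\in[t]}x_i$. For $t\in[T-1]$ let $f_I(X_t,D_t)=c^I(X_t-D_t)$, $f_B(X_t,D_t)=c^B(D_t-X_t)$; for $t=T$ let $f_I(X_T,D_T)=c^I(X_T-D_T)+c^PX_T-b^PD_T$, $f_B(X_T,D_T)=c^B(D_T-X_T)+c^PX_T-b^PX_T$. Nominal cumulative demands $\widehat{D}_t\ge0$ are nondecreasing, deviations $0\le\Delta_t\le\widehat{D}_t$, budget $\Gamma^c$. The directed layered graph $G$ has layers $V_0=\{\mathfrak{s}\}$ with $\mathfrak{s}=0^0$, $V_t=\{t^0,t^1,\dots,t^{\Gamma^c}\}$ for $t\in[T]$,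 and $V_{T+1}=\{\mathfrak{t}\}$. For $t\in[T]$, each node $(t-1)^{\delta}\in V_{t-1}$ and each integer $\delta_t\in\{0,\dots,\Delta_t\}$ with $\delta+\delta_t\le\Gamma^c$, there is an arc $((t-1)^{\delta},t^{\delta+\delta_t})$ with cost $\max\{f_I(X_t,\widehat{D}_t-\delta_t),f_B(X_t,\widehat{D}_t+\delta_t)\}$; every node of $V_T$ is joined to $\mathfrak{t}$ by an arc of cost $0$. The length of a path is the sum of its arc costs. *)

theory Defs
  imports Complex_Main
begin

definition cumX :: "(nat \<Rightarrow> real) \<Rightarrow> nat \<Rightarrow> real" where
  "cumX x t = (\<Sum>i\<in>{1..t}. x i)"

definition fI :: "nat \<Rightarrow> real \<Rightarrow> real \<Rightarrow> real \<Rightarrow> nat \<Rightarrow> real \<Rightarrow> real \<Rightarrow> real" where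
  "fI T cP cI bP t X D =
     (if t < T then cI * (X - D) else cI * (X - D) + cP * X - bP * D)"

definition fB :: "nat \<Rightarrow> real \<Rightarrow> real \<Rightarrow> real \<Rightarrow> nat \<Rightarrow> real \<Rightarrow> real \<Rightarrow> real" where
  "fB T cP cB bP t X D =
     (if t < T then cB * (D - X) else cB * (D - X) + cP * X - bP * X)"

definition period_cost ::
  "nat \<Rightarrow> real \<Rightarrow> real \<Rightarrow> real \<Rightarrow> real \<Rightarrow> (nat \<Rightarrow> real) \<Rightarrow> (nat \<Rightarrow> real)
   \<Rightarrow> nat \<Rightarrow> real \<Rightarrow> real" where
  "period_cost T cP cI cB bP Dhat x t d =
     max (fI T cP cI bP t (cumX x t) (Dhat t - d)) (fB T cP cB bP t (cumX x t) (Dhat t + d))"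

definition feasible_dev :: "nat \<Rightarrow> nat \<Rightarrow> (nat \<Rightarrow> nat) \<Rightarrow> (nat \<Rightarrow> real) \<Rightarrow> bool" where
  "feasible_dev T Gamma Delta \<delta> \<longleftrightarrow>
     (\<Sum>t\<in>{1..T}. \<delta> t) \<le> real Gamma \<and> (\<forall>t\<in>{1..T}. 0 \<le> \<delta> t \<and> \<delta> t \<le> real (Delta t))"

definition objective :: "nat \<Rightarrow> (nat \<Rightarrow> real \<Rightarrow> real) \<Rightarrow> (nat \<Rightarrow> real) \<Rightarrow> real" where
  "objective T g \<delta> = (\<Sum>t\<in>{1..T}. g t (\<delta> t))"

text \<open>The layered graph G. Node Nd t k is t^k (so the source s = 0^0 is Nd 0 0), Snk is the sink.\<close>
datatype node = Nd nat nat | Snk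

definition is_vertex :: "nat \<Rightarrow> nat \<Rightarrow> node \<Rightarrow> bool" where
  "is_vertex T Gamma v = (case v of
      Nd t k \<Rightarrow> (t = 0 \<and> k = 0) \<or> (1 \<le> t \<and> t \<le> T \<and> k \<le> Gamma)
    | Snk \<Rightarrow> True)"

definition is_arc :: "nat \<Rightarrow> nat \<Rightarrow> (nat \<Rightarrow> nat) \<Rightarrow> node \<Rightarrow> node \<Rightarrow> bool" where
  "is_arc T Gamma Delta u v = (is_vertex T Gamma u \<and> is_vertex T Gamma v \<and>
     (case (u, v) of
        (Nd s k, Nd t k') \<Rightarrow> 1 \<le> t \<and> t \<le> T \<and> s + 1 = t \<and> k \<le> k' \<and> k' - k \<le> Delta t \<and> k' \<le> Gamma
      | (Nd s k, Snk) \<Rightarrow> s = T \<and> 1 \<le> T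
      | _ \<Rightarrow> False))"

definition arc_cost :: "(nat \<Rightarrow> real \<Rightarrow> real) \<Rightarrow> node \<Rightarrow> node \<Rightarrow> real" where
  "arc_cost g u v = (case (u, v) of
        (Nd s k, Nd t k') \<Rightarrow> g t (real (k' - k))
      | _ \<Rightarrow> 0)"

definition st_path :: "nat \<Rightarrow> nat \<Rightarrow> (nat \<Rightarrow> nat) \<Rightarrow> node list \<Rightarrow> bool" where
  "st_path T Gamma Delta p \<longleftrightarrow> p \<noteq> [] \<and> hd p = Nd 0 0 \<and> last p = Snk \<and>
     (\<forall>i. Suc i < length p \<longrightarrow> is_arc T Gamma Delta (p ! i) (p ! Suc i))"

definition path_length :: "(nat \<Rightarrow> real \<Rightarrow> real) \<Rightarrow> node list \<Rightarrow> real" where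
  "path_length g p = (\<Sum>(u, v)\<leftarrow>zip p (tl p). arc_cost g u v)"

end

theory Submission
  imports Defs "HOL-Analysis.Convex"
begin

(* Each period cost is the maximum of two affine functions of the deviation, hence convex, so the
   separable objective is convex on the polytope of feasible deviations and can be pushed to an
   integral point without decreasing it: with two fractional coordinates move along e_i - e_j, with
   a single one round it to its floor or ceiling (the budget Gamma stays respected because all
   other coordinates and Gamma are integers). Integral deviations are exactly the increments of the
   layer indices t^k along an s-t path, and the path length equals the objective. *)

lemma convex_on_max:
  assumes "convex_on S f" and "convex_on S g"
  shows "convex_on S (\<lambda>x. max (f x) (g x))"
proof -
  have "max (f (u *\<^sub>R x + v *\<^sub>R y)) (g (u *\<^sub>R x + v *\<^sub>R y))
      \<le> u * max (f x) (g x) + v * max (f y) (g y)"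
    if "x \<in> S" "y \<in> S" "0 \<le> u" "0 \<le> v" "u + v = 1" for x y u v
  proof -
    have "u * f x + v * f y \<le> u * max (f x) (g x) + v * max (f y) (g y)"
      and "u * g x + v * g y \<le> u * max (f x) (g x) + v * max (f y) (g y)"
      using that by (auto intro!: add_mono mult_left_mono)
    then show ?thesis
      using that assms unfolding convex_on_def by (smt (verit))
  qed
  then show ?thesis
    using assms unfolding convex_on_def by blast
qed

lemma convex_on_compose_affine:
  fixes f :: "real \<Rightarrow> real"
  assumes "convex_on UNIV f"
  shows "convex_on UNIV (\<lambda>s. f (a + c * s))"
proof -
  have "a + c * (u * x + v * y) = u * (a + c * x) + v * (a + c * y)" if "u + v = 1" for u v x y
  proof -
    have "u * (a + c * x) + v * (a + c * y) = (u + v) * a + c * (u * x + v * y)"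
      by (simp add: algebra_simps)
    with that show ?thesis by simp
  qed
  then show ?thesis
    using assms unfolding convex_on_def by (metis UNIV_I real_scaleR_def)
qed

lemma convex_on_affine: "convex_on UNIV (\<lambda>s::real. a + c * s)"
  using convex_on_compose_affine[of "\<lambda>x. x"] by (simp add: convex_on_ident)

lemma period_cost_eq_max_affine:
  "period_cost T cP cI cB bP Dhat x t d =
     max (fI T cP cI bP t (cumX x t) (Dhat t) + (if t < T then cI else cI + bP) * d)
         (fB T cP cB bP t (cumX x t) (Dhat t) + cB * d)"
  by (simp add: period_cost_def fI_def fB_def algebra_simps)

lemma convex_period_cost: "convex_on UNIV (period_cost T cP cI cB bP Dhat x t)"
  unfolding period_cost_eq_max_affine by (intro convex_on_max convex_on_affine)

lemma convex_on_UNIV_le_max: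
  fixes f :: "real \<Rightarrow> real"
  assumes "convex_on UNIV f" and "a \<le> y" and "y \<le> b"
  shows "f y \<le> max (f a) (f b)"
  using assms by (intro convex_on_le_max convex_on_subset[OF assms(1)]) auto

lemma sum_fun_upd_arg:
  fixes h :: "'a \<Rightarrow> 'b \<Rightarrow> 'c::ab_group_add"
  assumes "finite A" and "i \<in> A"
  shows "(\<Sum>t\<in>A. h t ((f(i := v)) t)) = (\<Sum>t\<in>A. h t (f t)) - h i (f i) + h i v"
proof -
  have "(\<Sum>t\<in>A. h t ((f(i := v)) t)) = h i v + (\<Sum>t\<in>A - {i}. h t ((f(i := v)) t))"
    using assms by (simp add: sum.remove)
  also have "(\<Sum>t\<in>A - {i}. h t ((f(i := v)) t)) = (\<Sum>t\<in>A - {i}. h t (f t))"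
    by (rule sum.cong) auto
  also have "(\<Sum>t\<in>A - {i}. h t (f t)) = (\<Sum>t\<in>A. h t (f t)) - h i (f i)"
    using sum.remove[OF assms, of "\<lambda>t. h t (f t)"] by (simp add: algebra_simps)
  finally show ?thesis by (simp add: algebra_simps)
qed

lemma between_floor_ceiling_bounds:
  assumes "0 \<le> y" "y \<le> real n" "of_int \<lfloor>y\<rfloor> \<le> v" "v \<le> of_int \<lceil>y\<rceil>"
  shows "0 \<le> v" "v \<le> real n"
proof -
  have "0 \<le> \<lfloor>y\<rfloor>" using assms by simp
  then show "0 \<le> v" using assms by linarith
  have "\<lceil>y\<rceil> \<le> int n" using assms by (simp add: ceiling_le_iff)
  then show "v \<le> real n" using assms by linarith
qed

lemma objective_fun_upd:
  "i \<in> {1..T} \<Longrightarrow> objective T g (\<delta>(i := v)) = objective T g \<delta> - g i (\<delta> i) + g i v"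
  unfolding objective_def by (rule sum_fun_upd_arg) auto

definition fractional_periods :: "nat \<Rightarrow> (nat \<Rightarrow> real) \<Rightarrow> nat set" where
  "fractional_periods T \<delta> = {t \<in> {1..T}. \<delta> t \<notin> \<int>}"

lemma round_single_fractional:
  assumes convex: "convex_on UNIV (g i)" and feasible: "feasible_dev T Gamma Delta \<delta>"
    and single: "fractional_periods T \<delta> = {i}"
  shows "\<exists>\<delta>'. feasible_dev T Gamma Delta \<delta>' \<and> fractional_periods T \<delta>' = {} \<and>
    objective T g \<delta> \<le> objective T g \<delta>'"
proof -
  have i: "i \<in> {1..T}" using single by (auto simp: fractional_periods_def)
  have sum_le: "(\<Sum>t\<in>{1..T}. \<delta> t) \<le> real Gamma"
    and bounds: "\<And>t. t \<in> {1..T} \<Longrightarrow> 0 \<le> \<delta> t \<and> \<delta> t \<le> real (Delta t)"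
    using feasible by (auto simp: feasible_dev_def)
  obtain v where v: "v = of_int \<lfloor>\<delta> i\<rfloor> \<or> v = of_int \<lceil>\<delta> i\<rceil>" and gain: "g i (\<delta> i) \<le> g i v"
    using convex_on_UNIV_le_max[OF convex, of "of_int \<lfloor>\<delta> i\<rfloor>" "\<delta> i" "of_int \<lceil>\<delta> i\<rceil>"]
    by (auto simp: max_def split: if_splits)
  have v_between: "of_int \<lfloor>\<delta> i\<rfloor> \<le> v" "v \<le> of_int \<lceil>\<delta> i\<rceil>"
    using v by (auto intro: order_trans[OF of_int_floor_le])
  define \<delta>' where "\<delta>' = \<delta>(i := v)"
  define N where "N = (\<Sum>t\<in>{1..T} - {i}. \<delta> t)"
  have "N \<in> \<int>"
    using single unfolding N_def fractional_periods_def by (intro Ints_sum) auto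
  then obtain n where n: "N = of_int n" by (auto elim: Ints_cases)
  have sum_eq: "(\<Sum>t\<in>{1..T}. \<delta> t) = N + \<delta> i"
    using i by (simp add: N_def sum.remove)
  have "\<lceil>N + \<delta> i\<rceil> \<le> int Gamma"
    using sum_le sum_eq by (simp add: ceiling_le_iff)
  then have "N + of_int \<lceil>\<delta> i\<rceil> \<le> real Gamma"
    by (simp add: n ceiling_add_of_int add.commute[of "of_int n"])
  moreover have "(\<Sum>t\<in>{1..T}. \<delta>' t) = N + v"
    using objective_fun_upd[OF i, of "\<lambda>_ d. d" \<delta> v] sum_eq by (simp add: objective_def \<delta>'_def)
  ultimately have "(\<Sum>t\<in>{1..T}. \<delta>' t) \<le> real Gamma"
    using v_between by linarith
  moreover have "0 \<le> v \<and> v \<le> real (Delta i)"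
    using between_floor_ceiling_bounds[OF _ _ v_between] bounds[OF i] by blast
  ultimately have "feasible_dev T Gamma Delta \<delta>'"
    using bounds by (auto simp: feasible_dev_def \<delta>'_def)
  moreover have "fractional_periods T \<delta>' = {}"
    using single v by (auto simp: fractional_periods_def \<delta>'_def)
  ultimately show ?thesis
    using gain objective_fun_upd[OF i, of g \<delta> v] by (intro exI[of _ \<delta>']) (simp add: \<delta>'_def)
qed

lemma objective_exchange:
  assumes "i \<in> {1..T}" "j \<in> {1..T}" "i \<noteq> j"
  shows "objective T g (\<delta>(i := \<delta> i + s, j := \<delta> j - s)) =
    objective T g \<delta> - (g i (\<delta> i) + g j (\<delta> j)) + (g i (\<delta> i + s) + g j (\<delta> j - s))"
  using objective_fun_upd[OF assms(2), of g "\<delta>(i := \<delta> i + s)" "\<delta> j - s"]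
    objective_fun_upd[OF assms(1), of g \<delta> "\<delta> i + s"] assms(3)
  by simp

lemma feasible_dev_exchange:
  assumes feasible: "feasible_dev T Gamma Delta \<delta>"
    and ij: "i \<in> {1..T}" "j \<in> {1..T}" "i \<noteq> j"
    and i_between: "of_int \<lfloor>\<delta> i\<rfloor> \<le> \<delta> i + s" "\<delta> i + s \<le> of_int \<lceil>\<delta> i\<rceil>"
    and j_between: "of_int \<lfloor>\<delta> j\<rfloor> \<le> \<delta> j - s" "\<delta> j - s \<le> of_int \<lceil>\<delta> j\<rceil>"
  shows "feasible_dev T Gamma Delta (\<delta>(i := \<delta> i + s, j := \<delta> j - s))"
    (is "feasible_dev T Gamma Delta ?\<delta>'")
proof -
  have bounds: "0 \<le> \<delta> t \<and> \<delta> t \<le> real (Delta t)" if "t \<in> {1..T}" for t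
    using feasible that by (auto simp: feasible_dev_def)
  have "0 \<le> ?\<delta>' t \<and> ?\<delta>' t \<le> real (Delta t)" if t: "t \<in> {1..T}" for t
  proof -
    consider "t = i" | "t = j" | "t \<noteq> i" "t \<noteq> j" by blast
    then show ?thesis
      using between_floor_ceiling_bounds[OF _ _ i_between] bounds[OF ij(1)]
        between_floor_ceiling_bounds[OF _ _ j_between] bounds[OF ij(2)] bounds[OF t] ij(3)
      by cases auto
  qed
  moreover have "objective T (\<lambda>_ d. d) ?\<delta>' = objective T (\<lambda>_ d. d) \<delta>"
    using objective_exchange[OF ij] by simp
  ultimately show ?thesis
    using feasible by (simp add: feasible_dev_def objective_def)
qed

lemma exchange_two_fractional:
  assumes convex_i: "convex_on UNIV (g i)" and convex_j: "convex_on UNIV (g j)"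
    and feasible: "feasible_dev T Gamma Delta \<delta>"
    and i: "i \<in> fractional_periods T \<delta>" and j: "j \<in> fractional_periods T \<delta>" and "i \<noteq> j"
  shows "\<exists>\<delta>'. feasible_dev T Gamma Delta \<delta>' \<and> fractional_periods T \<delta>' \<subset> fractional_periods T \<delta> \<and>
    objective T g \<delta> \<le> objective T g \<delta>'"
proof -
  have ij: "i \<in> {1..T}" "j \<in> {1..T}" "i \<noteq> j"
    using i j \<open>i \<noteq> j\<close> by (auto simp: fractional_periods_def)
  \<comment> \<open>[a, b] is the largest step range along e_i - e_j keeping both coordinates between
    their floor and ceiling; at either end one of them becomes an integer\<close>
  define a where "a = max (of_int \<lfloor>\<delta> i\<rfloor> - \<delta> i) (\<delta> j - of_int \<lceil>\<delta> j\<rceil>)"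
  define b where "b = min (of_int \<lceil>\<delta> i\<rceil> - \<delta> i) (\<delta> j - of_int \<lfloor>\<delta> j\<rfloor>)"
  define \<phi> where "\<phi> = (\<lambda>s. g i (\<delta> i + s) + g j (\<delta> j - s))"
  have "convex_on UNIV \<phi>"
    using convex_on_add[OF convex_on_compose_affine[OF convex_i, of "\<delta> i" 1]
        convex_on_compose_affine[OF convex_j, of "\<delta> j" "-1"]]
    by (simp add: \<phi>_def)
  moreover have "a \<le> 0" "0 \<le> b" by (auto simp: a_def b_def)
  ultimately obtain s where s: "s = a \<or> s = b" and gain: "\<phi> 0 \<le> \<phi> s"
    using convex_on_UNIV_le_max[of \<phi> a 0 b] by (metis max_def)
  have s_range: "of_int \<lfloor>\<delta> i\<rfloor> - \<delta> i \<le> s" "s \<le> of_int \<lceil>\<delta> i\<rceil> - \<delta> i"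
    "\<delta> j - of_int \<lceil>\<delta> j\<rceil> \<le> s" "s \<le> \<delta> j - of_int \<lfloor>\<delta> j\<rfloor>"
    using s \<open>a \<le> 0\<close> \<open>0 \<le> b\<close> unfolding a_def b_def by linarith+
  define \<delta>' where "\<delta>' = \<delta>(i := \<delta> i + s, j := \<delta> j - s)"
  have "feasible_dev T Gamma Delta \<delta>'"
    unfolding \<delta>'_def using s_range by (intro feasible_dev_exchange[OF feasible ij]) auto
  moreover have "fractional_periods T \<delta>' \<subset> fractional_periods T \<delta>"
  proof -
    have "a \<in> {of_int \<lfloor>\<delta> i\<rfloor> - \<delta> i, \<delta> j - of_int \<lceil>\<delta> j\<rceil>}"
      and "b \<in> {of_int \<lceil>\<delta> i\<rceil> - \<delta> i, \<delta> j - of_int \<lfloor>\<delta> j\<rfloor>}"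
      unfolding a_def b_def max_def min_def by auto
    then have "\<delta>' i \<in> \<int> \<or> \<delta>' j \<in> \<int>"
      using s ij(3) by (auto simp: \<delta>'_def)
    then have "i \<notin> fractional_periods T \<delta>' \<or> j \<notin> fractional_periods T \<delta>'"
      by (auto simp: fractional_periods_def)
    moreover have "fractional_periods T \<delta>' \<subseteq> fractional_periods T \<delta>"
    proof
      fix t assume "t \<in> fractional_periods T \<delta>'"
      then show "t \<in> fractional_periods T \<delta>"
        using i j by (cases "t = i \<or> t = j") (auto simp: fractional_periods_def \<delta>'_def)
    qed
    ultimately show ?thesis
      using i j by blast
  qed
  moreover have "objective T g \<delta> \<le> objective T g \<delta>'"
    using objective_exchange[OF ij, of g \<delta> s] gain by (simp add: \<phi>_def \<delta>'_def)
  ultimately show ?thesis by blast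
qed

lemma exists_integral_dev_ge:
  assumes convex: "\<And>t. t \<in> {1..T} \<Longrightarrow> convex_on UNIV (g t)"
    and "feasible_dev T Gamma Delta \<delta>"
  shows "\<exists>\<delta>'. feasible_dev T Gamma Delta \<delta>' \<and> fractional_periods T \<delta>' = {} \<and>
    objective T g \<delta> \<le> objective T g \<delta>'"
  using assms(2)
proof (induction "card (fractional_periods T \<delta>)" arbitrary: \<delta> rule: less_induct)
  case less
  have in_range: "fractional_periods T \<delta> \<subseteq> {1..T}"
    by (auto simp: fractional_periods_def)
  consider "fractional_periods T \<delta> = {}" | i where "fractional_periods T \<delta> = {i}"
    | i j where "i \<in> fractional_periods T \<delta>" "j \<in> fractional_periods T \<delta>" "i \<noteq> j"
    by blast
  then show ?case
  proof cases
    case 1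
    then show ?thesis using less.prems by blast
  next
    case (2 i)
    then have "i \<in> {1..T}" using in_range by auto
    then show ?thesis
      using round_single_fractional[where g = g, OF convex[OF \<open>i \<in> {1..T}\<close>] less.prems 2] by blast
  next
    case (3 i j)
    then have ij: "i \<in> {1..T}" "j \<in> {1..T}" using in_range by auto
    then obtain \<delta>' where \<delta>': "feasible_dev T Gamma Delta \<delta>'"
      "fractional_periods T \<delta>' \<subset> fractional_periods T \<delta>" "objective T g \<delta> \<le> objective T g \<delta>'"
      using exchange_two_fractional[where g = g, OF convex[OF ij(1)] convex[OF ij(2)] less.prems 3] by blast
    then have "card (fractional_periods T \<delta>') < card (fractional_periods T \<delta>)"
      using in_range by (meson finite_atLeastAtMost psubset_card_mono rev_finite_subset)
    then show ?thesis
      using less.hyps \<delta>' by fastforce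
  qed
qed

definition level_path :: "nat \<Rightarrow> (nat \<Rightarrow> nat) \<Rightarrow> node list" where
  "level_path T k = map (\<lambda>t. if t \<le> T then Nd t (k t) else Snk) [0..<T + 2]"

definition admissible_levels :: "nat \<Rightarrow> nat \<Rightarrow> (nat \<Rightarrow> nat) \<Rightarrow> (nat \<Rightarrow> nat) \<Rightarrow> bool" where
  "admissible_levels T Gamma Delta k \<longleftrightarrow> k 0 = 0 \<and>
     (\<forall>t\<in>{1..T}. k (t - 1) \<le> k t \<and> k t - k (t - 1) \<le> Delta t \<and> k t \<le> Gamma)"

lemma admissible_levelsD:
  assumes "admissible_levels T Gamma Delta k" and "i < T"
  shows "k i \<le> k (Suc i)" "k (Suc i) - k i \<le> Delta (Suc i)" "k (Suc i) \<le> Gamma"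
proof -
  have "Suc i \<in> {1..T}" using \<open>i < T\<close> by simp
  then show "k i \<le> k (Suc i)" "k (Suc i) - k i \<le> Delta (Suc i)" "k (Suc i) \<le> Gamma"
    using assms(1) unfolding admissible_levels_def by fastforce+
qed

lemma length_level_path [simp]: "length (level_path T k) = T + 2"
  by (simp add: level_path_def)

lemma nth_level_path:
  "i < T + 2 \<Longrightarrow> level_path T k ! i = (if i \<le> T then Nd i (k i) else Snk)"
  by (simp add: level_path_def del: upt_Suc)

lemma path_length_conv_nth:
  "path_length g p = (\<Sum>i < length p - 1. arc_cost g (p ! i) (p ! Suc i))"
  unfolding path_length_def sum_list_sum_nth
  by (rule sum.cong) (auto simp: nth_tl atLeast0LessThan)

lemma path_length_level_path:
  "path_length g (level_path T k) = (\<Sum>t\<in>{1..T}. g t (real (k t - k (t - 1))))"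
proof -
  have "path_length g (level_path T k)
      = (\<Sum>i<Suc T. arc_cost g (level_path T k ! i) (level_path T k ! Suc i))"
    by (simp add: path_length_conv_nth)
  also have "\<dots> = (\<Sum>i<T. g (Suc i) (real (k (Suc i) - k i)))"
    by (simp add: nth_level_path arc_cost_def)
  also have "\<dots> = (\<Sum>t\<in>{1..T}. g t (real (k t - k (t - 1))))"
    by (simp add: sum.atLeast1_atMost_eq)
  finally show ?thesis .
qed

lemma st_path_level_path:
  assumes "1 \<le> T" and levels: "admissible_levels T Gamma Delta k"
  shows "st_path T Gamma Delta (level_path T k)"
proof -
  have vertex: "is_vertex T Gamma (Nd t (k t))" if "t \<le> T" for t
    using levels that by (cases t) (auto simp: admissible_levels_def is_vertex_def)
  have "is_arc T Gamma Delta (level_path T k ! i) (level_path T k ! Suc i)" if "i \<le> T" for i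
  proof (cases "i < T")
    case True
    then show ?thesis
      using vertex[of i] vertex[of "Suc i"] admissible_levelsD[OF levels True]
      by (simp add: nth_level_path is_arc_def)
  next
    case False
    then show ?thesis
      using that vertex[of T] \<open>1 \<le> T\<close> by (simp add: nth_level_path is_arc_def is_vertex_def)
  qed
  moreover have nonempty: "level_path T k \<noteq> []"
    by (simp flip: length_greater_0_conv)
  moreover have "hd (level_path T k) = Nd 0 0"
    using levels by (simp add: hd_conv_nth[OF nonempty] nth_level_path admissible_levels_def)
  moreover have "last (level_path T k) = Snk"
    by (simp add: last_conv_nth[OF nonempty] nth_level_path)
  ultimately show ?thesis
    by (simp add: st_path_def)
qed

lemma st_path_Nd_not_last:
  assumes "st_path T Gamma Delta q" and "t < length q" and "q ! t = Nd s l"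
  shows "Suc t < length q"
proof (rule ccontr)
  assume "\<not> Suc t < length q"
  then have "q \<noteq> []" "t = length q - 1"
    using assms(2) by auto
  then have "q ! t = last q"
    by (simp add: last_conv_nth)
  then show False
    using assms by (simp add: st_path_def)
qed

lemma st_path_nth_layer:
  assumes path: "st_path T Gamma Delta q" and "t \<le> T"
  shows "t < length q \<and> (\<exists>l. q ! t = Nd t l)"
  using \<open>t \<le> T\<close>
proof (induction t)
  case 0
  then show ?case
    using path by (auto simp: st_path_def hd_conv_nth)
next
  case (Suc t)
  then obtain l where t: "t < length q" "q ! t = Nd t l" by auto
  then have next_index: "Suc t < length q"
    by (rule st_path_Nd_not_last[OF path])
  moreover have "\<exists>l'. q ! Suc t = Nd (Suc t) l'"
    using path next_index t Suc.prems
    by (cases "q ! Suc t") (auto simp: st_path_def is_arc_def)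
  ultimately show ?case by blast
qed

lemma st_path_final:
  assumes path: "st_path T Gamma Delta q"
  shows "q ! Suc T = Snk" and "length q = T + 2"
proof -
  obtain l where T: "T < length q" "q ! T = Nd T l"
    using st_path_nth_layer[OF path order_refl] by blast
  have "Suc T < length q"
    using st_path_Nd_not_last[OF path T] .
  then have "is_arc T Gamma Delta (Nd T l) (q ! Suc T)"
    using path T(2) unfolding st_path_def by metis
  then show sink: "q ! Suc T = Snk"
    by (cases "q ! Suc T") (auto simp: is_arc_def)
  have "\<not> Suc (Suc T) < length q"
    using path sink by (auto simp: st_path_def is_arc_def)
  then show "length q = T + 2"
    using \<open>Suc T < length q\<close> by simp
qed

lemma st_path_imp_level_path:
  assumes path: "st_path T Gamma Delta q"
  shows "\<exists>k. admissible_levels T Gamma Delta k \<and> q = level_path T k"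
proof -
  define k where "k t = (case q ! t of Nd _ l \<Rightarrow> l | Snk \<Rightarrow> 0)" for t
  have q_nth: "q ! t = Nd t (k t)" if "t \<le> T" for t
    using st_path_nth_layer[OF path that] by (auto simp: k_def)
  have "q = level_path T k"
  proof (rule nth_equalityI)
    show "length q = length (level_path T k)"
      using st_path_final[OF path] by simp
    show "q ! i = level_path T k ! i" if "i < length q" for i
      using that st_path_final[OF path] q_nth[of i]
      by (cases "i \<le> T") (auto simp: nth_level_path less_Suc_eq)
  qed
  moreover have "admissible_levels T Gamma Delta k"
  proof -
    have "k 0 = 0"
      using path q_nth[of 0] by (auto simp: st_path_def hd_conv_nth)
    moreover have "k (t - 1) \<le> k t \<and> k t - k (t - 1) \<le> Delta t \<and> k t \<le> Gamma"
      if "t \<in> {1..T}" for t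
    proof -
      have "Suc (t - 1) < length q" "Suc (t - 1) = t"
        using that st_path_final[OF path] by auto
      then have "is_arc T Gamma Delta (q ! (t - 1)) (q ! t)"
        using path unfolding st_path_def by metis
      moreover have "q ! (t - 1) = Nd (t - 1) (k (t - 1))" "q ! t = Nd t (k t)"
        using that by (auto intro: q_nth)
      ultimately show ?thesis
        by (simp add: is_arc_def)
    qed
    ultimately show ?thesis
      by (simp add: admissible_levels_def)
  qed
  ultimately show ?thesis by blast
qed

lemma feasible_dev_of_levels:
  assumes levels: "admissible_levels T Gamma Delta k"
  shows "feasible_dev T Gamma Delta (\<lambda>t. real (k t - k (t - 1)))"
proof -
  have step: "k (t - 1) \<le> k t \<and> k t - k (t - 1) \<le> Delta t \<and> k t \<le> Gamma" if "t \<in> {1..T}" for t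
    using levels that unfolding admissible_levels_def by blast
  have "(\<Sum>t\<in>{1..T}. real (k t - k (t - 1))) = (\<Sum>t\<in>{1..T}. real (k t) - real (k (t - 1)))"
    using step by (intro sum.cong) (auto simp: of_nat_diff)
  also have "\<dots> = real (k T) - real (k 0)"
    using sum_telescope''[of 0 T "\<lambda>t. real (k t)"] by simp
  also have "\<dots> \<le> real Gamma"
    using levels step[of T] by (cases T) (auto simp: admissible_levels_def)
  finally show ?thesis
    using step by (auto simp: feasible_dev_def simp del: of_nat_diff)
qed

lemma integral_dev_imp_levels:
  assumes feasible: "feasible_dev T Gamma Delta \<delta>" and integral: "fractional_periods T \<delta> = {}"
  shows "\<exists>k. admissible_levels T Gamma Delta k \<and> (\<forall>t\<in>{1..T}. \<delta> t = real (k t - k (t - 1)))"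
proof -
  define d where "d t = nat \<lfloor>\<delta> t\<rfloor>" for t
  define k where "k t = (\<Sum>s\<in>{1..t}. d s)" for t
  have bounds: "0 \<le> \<delta> t" "\<delta> t \<le> real (Delta t)" if "t \<in> {1..T}" for t
    using feasible that by (auto simp: feasible_dev_def)
  have \<delta>_eq: "\<delta> t = real (d t)" if "t \<in> {1..T}" for t
    using integral bounds[OF that] that by (auto simp: fractional_periods_def d_def elim!: Ints_cases)
  have k_step: "k t = k (t - 1) + d t" if "1 \<le> t" for t
    using that by (cases t) (auto simp: k_def)
  have "real (k T) = (\<Sum>t\<in>{1..T}. \<delta> t)"
    by (simp add: k_def \<delta>_eq)
  then have k_le_Gamma: "k T \<le> Gamma"
    using feasible by (simp add: feasible_dev_def)
  have k_le_k_T: "k t \<le> k T" if "t \<le> T" for t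
    unfolding k_def using that by (intro sum_mono2) auto
  have "k (t - 1) \<le> k t \<and> k t - k (t - 1) \<le> Delta t \<and> k t \<le> Gamma" if t: "t \<in> {1..T}" for t
  proof -
    have "d t \<le> Delta t"
      using bounds[OF t] \<delta>_eq[OF t] by simp
    then show ?thesis
      using k_step[of t] k_le_k_T[of t] k_le_Gamma t by simp
  qed
  then have "admissible_levels T Gamma Delta k"
    by (simp add: admissible_levels_def k_def)
  moreover have "\<delta> t = real (k t - k (t - 1))" if "t \<in> {1..T}" for t
    using \<delta>_eq[OF that] k_step[of t] that by simp
  ultimately show ?thesis by blast
qed

lemma st_path_imp_feasible_dev:
  assumes "st_path T Gamma Delta q"
  shows "\<exists>\<delta>. feasible_dev T Gamma Delta \<delta> \<and> objective T g \<delta> = path_length g q"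
proof -
  obtain k where levels: "admissible_levels T Gamma Delta k" and "q = level_path T k"
    using st_path_imp_level_path[OF assms] by blast
  then have "objective T g (\<lambda>t. real (k t - k (t - 1))) = path_length g q"
    by (simp add: path_length_level_path objective_def)
  then show ?thesis
    using feasible_dev_of_levels[OF levels] by blast
qed

lemma integral_dev_imp_st_path:
  assumes "1 \<le> T" and "feasible_dev T Gamma Delta \<delta>" and "fractional_periods T \<delta> = {}"
  shows "\<exists>q. st_path T Gamma Delta q \<and> path_length g q = objective T g \<delta>"
proof -
  obtain k where levels: "admissible_levels T Gamma Delta k"
    and \<delta>_eq: "\<forall>t\<in>{1..T}. \<delta> t = real (k t - k (t - 1))"
    using integral_dev_imp_levels[OF assms(2,3)] by blast
  have "path_length g (level_path T k) = objective T g \<delta>"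
    unfolding path_length_level_path objective_def using \<delta>_eq by (intro sum.cong) auto
  then show ?thesis
    using st_path_level_path[OF assms(1) levels] by blast
qed

lemma attained_maximum_iff_mutual_domination:
  fixes f :: "'a \<Rightarrow> 'c::order" and h :: "'b \<Rightarrow> 'c"
  assumes Q_to_P: "\<And>q. Q q \<Longrightarrow> \<exists>p. P p \<and> f p = h q"
    and P_to_Q: "\<And>p. P p \<Longrightarrow> \<exists>q. Q q \<and> f p \<le> h q"
  shows "(\<exists>p. P p \<and> f p = C \<and> (\<forall>p'. P p' \<longrightarrow> f p' \<le> C)) \<longleftrightarrow>
         (\<exists>q. Q q \<and> h q = C \<and> (\<forall>q'. Q q' \<longrightarrow> h q' \<le> C))"
proof
  assume "\<exists>p. P p \<and> f p = C \<and> (\<forall>p'. P p' \<longrightarrow> f p' \<le> C)"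
  then obtain p where p: "P p" "f p = C" and max: "\<forall>p'. P p' \<longrightarrow> f p' \<le> C" by blast
  have bound: "h q' \<le> C" if Q_q': "Q q'" for q'
  proof -
    obtain p' where "P p'" "f p' = h q'" using Q_to_P[OF Q_q'] by blast
    then show ?thesis using max by auto
  qed
  obtain q where "Q q" "C \<le> h q"
    using P_to_Q[OF p(1)] p(2) by blast
  then show "\<exists>q. Q q \<and> h q = C \<and> (\<forall>q'. Q q' \<longrightarrow> h q' \<le> C)"
    using bound by (blast intro: order.antisym)
next
  assume "\<exists>q. Q q \<and> h q = C \<and> (\<forall>q'. Q q' \<longrightarrow> h q' \<le> C)"
  then obtain q where q: "Q q" "h q = C" and max: "\<forall>q'. Q q' \<longrightarrow> h q' \<le> C" by blast
  have bound: "f p' \<le> C" if P_p': "P p'" for p'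
  proof -
    obtain q' where "Q q'" "f p' \<le> h q'" using P_to_Q[OF P_p'] by blast
    then show ?thesis using max order.trans by blast
  qed
  obtain p where "P p" "f p = C"
    using Q_to_P[OF q(1)] q(2) by blast
  then show "\<exists>p. P p \<and> f p = C \<and> (\<forall>p'. P p' \<longrightarrow> f p' \<le> C)"
    using bound by blast
qed

theorem proposition2:
  fixes T :: nat and cP cI cB bP :: real
    and m :: nat and A :: "nat \<Rightarrow> nat \<Rightarrow> real" and b :: "nat \<Rightarrow> real"
    and x :: "nat \<Rightarrow> real" and Dhat :: "nat \<Rightarrow> real"
    and Delta :: "nat \<Rightarrow> nat" and Gamma :: nat and C :: real
  defines "Xset \<equiv> {y :: nat \<Rightarrow> real. (\<forall>i\<in>{1..T}. 0 \<le> y i) \<and>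
                     (\<forall>j<m. (\<Sum>i\<in>{1..T}. A j i * y i) \<le> b j)}"
    and "g \<equiv> period_cost T cP cI cB bP Dhat x"
  assumes "1 \<le> T"
    and "x \<in> Xset"
    and "\<forall>t\<in>{1..T}. 0 \<le> Dhat t"
    and "\<forall>s\<in>{1..T}. \<forall>t\<in>{1..T}. s \<le> t \<longrightarrow> Dhat s \<le> Dhat t"
    and "\<forall>t\<in>{1..T}. real (Delta t) \<le> Dhat t"
  shows "(\<exists>\<delta>. feasible_dev T Gamma Delta \<delta> \<and> objective T g \<delta> = C \<and>
             (\<forall>\<delta>'. feasible_dev T Gamma Delta \<delta>' \<longrightarrow> objective T g \<delta>' \<le> C))
     \<longleftrightarrow>
         (\<exists>p. st_path T Gamma Delta p \<and> path_length g p = C \<and>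
             (\<forall>q. st_path T Gamma Delta q \<longrightarrow> path_length g q \<le> C))"
proof (rule attained_maximum_iff_mutual_domination)
  show "\<exists>\<delta>. feasible_dev T Gamma Delta \<delta> \<and> objective T g \<delta> = path_length g q"
    if "st_path T Gamma Delta q" for q
    using st_path_imp_feasible_dev[OF that] .
  show "\<exists>q. st_path T Gamma Delta q \<and> objective T g \<delta> \<le> path_length g q"
    if feasible: "feasible_dev T Gamma Delta \<delta>" for \<delta>
  proof -
    have "convex_on UNIV (g t)" for t
      unfolding g_def by (rule convex_period_cost)
    then obtain \<delta>' where "feasible_dev T Gamma Delta \<delta>'" "fractional_periods T \<delta>' = {}"
      and "objective T g \<delta> \<le> objective T g \<delta>'"
      using exists_integral_dev_ge[OF _ feasible] by blast
    moreover obtain q where "st_path T Gamma Delta q" "path_length g q = objective T g \<delta>'"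
      using integral_dev_imp_st_path[OF \<open>1 \<le> T\<close> calculation(1,2)] by blast
    ultimately show ?thesis by auto
  qed
qed

end
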